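(* There is $N_0$ such that for all $N \geq N_0$, \[ \psi(N,6,3) \geq 1.2228. \]
   Context: $[N] = \{1,2,\dots,N\}$. For positive integers $K$ and $h \geq 3$, let $\mathcal{F}_{K,h}$ be the set of all functions $F(x) = \sum_{j=1}^K b_j \cos(jx)$ with real coefficients satisfying $\sum_{j=1}^K |b_j| = \frac{1}{\cos(\pi/h)}$. For nonempty $A \subseteq [N]$ and $F \in \mathcal{F}_{K,h}$ let $w_F(A) = \sum_{a \in A} F\!\left( \left(a - \frac{N+1}{2}\right) \frac{2\pi}{hN} \right)$, and let \[ \psi(N,K,h) = \min_{\emptyset \neq A \subseteq [N]} \sup \left\{ \frac{w_F(A)}{|A|} : F \in \mathcal{F}_{K,h} \right\}. \] *)

theory Defs
  imports "HOL-Analysis.Analysis"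
begin

definition cospoly :: "nat \<Rightarrow> (nat \<Rightarrow> real) \<Rightarrow> real \<Rightarrow> real" where
  "cospoly K b x = (\<Sum>j=1..K. b j * cos (real j * x))"

definition FKh :: "nat \<Rightarrow> nat \<Rightarrow> (real \<Rightarrow> real) set" where
  "FKh K h = {cospoly K b | b. (\<Sum>j=1..K. \<bar>b j\<bar>) = 1 / cos (pi / real h)}"

definition wF :: "nat \<Rightarrow> nat \<Rightarrow> (real \<Rightarrow> real) \<Rightarrow> nat set \<Rightarrow> real" where
  "wF N h F A = (\<Sum>a\<in>A. F ((real a - (real N + 1) / 2) * (2 * pi / (real h * real N))))"

definition psi :: "nat \<Rightarrow> nat \<Rightarrow> nat \<Rightarrow> real" where
  "psi N K h = Min ((\<lambda>A. (SUP F\<in>FKh K h. wF N h F A / real (card A)))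
                      ` {A. A \<subseteq> {1..N} \<and> A \<noteq> {}})"

end

theory Submission
  imports Defs
begin

text \<open>
  A single admissible function already gives the bound for every N: the sample points
  \<open>(a - (N+1)/2) \<cdot> 2\<pi>/(hN)\<close> all lie in \<open>[-\<pi>/h, \<pi>/h]\<close>, so if some \<open>F \<in> F\<^sub>K\<^sub>,\<^sub>h\<close> satisfies
  \<open>F \<ge> c\<close> on that interval, then every average \<open>w\<^sub>F(A)/|A|\<close> is at least \<open>c\<close>.
  For \<open>K = 6\<close>, \<open>h = 3\<close> we take \<open>F(x) = 1.547 cos x - 0.37 cos 3x + 0.083 cos 6x\<close>, whose
  coefficients have absolute sum \<open>2 = 1/cos(\<pi>/3)\<close>. With \<open>t = cos x \<in> [1/2, 1]\<close>,
  \<open>F(x) - 1.2228\<close> is a polynomial of degree 6 in \<open>t\<close>, shown nonnegative on four subintervals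
  by writing it in Bernstein form with nonnegative coefficients.
\<close>

lemma cospoly_abs_le: "\<bar>cospoly K b x\<bar> \<le> (\<Sum>j=1..K. \<bar>b j\<bar>)"
proof -
  have "\<bar>cospoly K b x\<bar> \<le> (\<Sum>j=1..K. \<bar>b j * cos (real j * x)\<bar>)"
    unfolding cospoly_def by (rule sum_abs)
  also have "\<dots> \<le> (\<Sum>j=1..K. \<bar>b j\<bar>)"
    by (intro sum_mono) (simp add: abs_mult mult_left_le)
  finally show ?thesis .
qed

lemma FKh_abs_le:
  assumes "F \<in> FKh K h"
  shows "\<bar>F x\<bar> \<le> 1 / cos (pi / real h)"
proof -
  obtain b where "F = cospoly K b" "(\<Sum>j=1..K. \<bar>b j\<bar>) = 1 / cos (pi / real h)"
    using assms unfolding FKh_def by blast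
  then show ?thesis using cospoly_abs_le by metis
qed

lemma abs_sample_point_le:
  assumes "1 \<le> a" "a \<le> N" "h > 0"
  shows "\<bar>(real a - (real N + 1) / 2) * (2 * pi / (real h * real N))\<bar> \<le> pi / real h"
proof -
  have "\<bar>real a - (real N + 1) / 2\<bar> \<le> real N / 2"
    using assms by (simp add: abs_le_iff field_simps)
  then have "\<bar>real a - (real N + 1) / 2\<bar> * (2 * pi / (real h * real N))
             \<le> real N / 2 * (2 * pi / (real h * real N))"
    by (intro mult_right_mono) auto
  also have "\<dots> = pi / real h"
    using assms by (simp add: field_simps)
  finally show ?thesis by (simp add: abs_mult)
qed

lemma bdd_above_wF_average:
  "bdd_above ((\<lambda>F. wF N h F A / real (card A)) ` FKh K h)"
proof (rule bdd_aboveI2)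
  fix F assume F: "F \<in> FKh K h"
  let ?M = "\<bar>1 / cos (pi / real h)\<bar>"
  have "wF N h F A \<le> real (card A) * ?M"
  proof -
    have "wF N h F A \<le> (\<Sum>a\<in>A. ?M)"
      unfolding wF_def
      by (intro sum_mono) (meson FKh_abs_le[OF F] abs_ge_self abs_le_D1 order_trans)
    then show ?thesis by (simp add: mult.commute)
  qed
  then show "wF N h F A / real (card A) \<le> ?M"
    by (cases "card A = 0") (simp_all add: divide_le_eq mult.commute)
qed

lemma wF_average_ge:
  assumes "finite A" "A \<noteq> {}" "A \<subseteq> {1..N}" "h > 0"
    and "\<And>x. \<bar>x\<bar> \<le> pi / real h \<Longrightarrow> c \<le> F x"
  shows "c \<le> wF N h F A / real (card A)"
proof -
  have "(\<Sum>a\<in>A. c) \<le> wF N h F A"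
    unfolding wF_def using assms
    by (intro sum_mono assms(5) abs_sample_point_le) auto
  moreover have "real (card A) > 0"
    using assms by (simp add: card_gt_0_iff)
  ultimately show ?thesis
    by (simp add: le_divide_eq mult.commute)
qed

lemma psi_ge_of_FKh_ge:
  assumes "F \<in> FKh K h" "h > 0" "N \<ge> 1"
    and "\<And>x. \<bar>x\<bar> \<le> pi / real h \<Longrightarrow> c \<le> F x"
  shows "c \<le> psi N K h"
  unfolding psi_def
proof (rule Min.boundedI)
  show "finite ((\<lambda>A. SUP F\<in>FKh K h. wF N h F A / real (card A)) ` {A. A \<subseteq> {1..N} \<and> A \<noteq> {}})"
    by (rule finite_imageI, rule finite_subset[of _ "Pow {1..N}"]) auto
  show "(\<lambda>A. SUP F\<in>FKh K h. wF N h F A / real (card A)) ` {A. A \<subseteq> {1..N} \<and> A \<noteq> {}} \<noteq> {}"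
    using assms(3) by auto
next
  fix v assume "v \<in> (\<lambda>A. SUP F\<in>FKh K h. wF N h F A / real (card A)) ` {A. A \<subseteq> {1..N} \<and> A \<noteq> {}}"
  then obtain A where A: "A \<subseteq> {1..N}" "A \<noteq> {}"
    and v: "v = (SUP F\<in>FKh K h. wF N h F A / real (card A))" by auto
  have "c \<le> wF N h F A / real (card A)"
    using A assms finite_subset by (intro wF_average_ge) auto
  also have "\<dots> \<le> v"
    unfolding v by (rule cSUP_upper[OF assms(1) bdd_above_wF_average])
  finally show "c \<le> v" .
qed

lemma bernstein_form_nonneg:
  fixes a b t :: real
  assumes "a \<le> t" "t \<le> b" "\<And>i. i \<le> n \<Longrightarrow> 0 \<le> c i"
  shows "0 \<le> (\<Sum>i\<le>n. c i * (t - a) ^ i * (b - t) ^ (n - i))"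
  using assms by (intro sum_nonneg mult_nonneg_nonneg zero_le_power) auto

definition certificate :: "real \<Rightarrow> real" where
  "certificate t = -6529/5000 + 2657/1000 * t + 747/500 * t^2 - 37/25 * t^3 - 498/125 * t^4
                   + 332/125 * t^6"

lemma certificate_nonneg_if_bernstein:
  fixes a b t :: real
  assumes "a \<le> t" "t \<le> b" "list_all (\<lambda>x. 0 \<le> x) cs" "length cs = 7"
    and "certificate t = (\<Sum>i\<le>6. cs ! i * (t - a) ^ i * (b - t) ^ (6 - i))"
  shows "0 \<le> certificate t"
  using assms bernstein_form_nonneg[of a t b 6 "(!) cs"] by (simp add: list_all_length)

lemma certificate_nonneg:
  assumes "1/2 \<le> t" "t \<le> 1"
  shows "0 \<le> certificate t"
proof -
  consider "t \<le> 3/4" | "3/4 \<le> t" "t \<le> 7/8" | "7/8 \<le> t" "t \<le> 15/16" | "15/16 \<le> t"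
    by linarith
  then show ?thesis
  proof cases
    case 1
    have "certificate t = (\<Sum>i\<le>6. [9472/625, 1046912/625, 883712/125, 1456448/125,
                                      1144432/125, 2114032/625, 294652/625] ! i
                                     * (t - 1/2) ^ i * (3/4 - t) ^ (6 - i))"
      by (simp add: certificate_def numeral_eq_Suc atMost_Suc) algebra
    with assms 1 show ?thesis
      by (intro certificate_nonneg_if_bernstein[of "1/2" t "3/4"]) simp_all
  next
    case 2
    have "certificate t = (\<Sum>i\<le>6. [18857728/625, 102070528/625, 8825408/25, 48372608/125,
                                      28070864/125, 40513808/625, 4601788/625] ! i
                                     * (t - 3/4) ^ i * (7/8 - t) ^ (6 - i))"
      by (simp add: certificate_def numeral_eq_Suc atMost_Suc) algebra
    with 2 show ?thesis
      by (intro certificate_nonneg_if_bernstein[of "3/4" t "7/8"]) simp_all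
  next
    case 3
    have "certificate t = (\<Sum>i\<le>6. [294514432/625, 1354188032/625, 492443456/125, 89955712/25,
                                      220356304/125, 302039632/625, 46608892/625] ! i
                                     * (t - 7/8) ^ i * (15/16 - t) ^ (6 - i))"
      by (simp add: certificate_def numeral_eq_Suc atMost_Suc) algebra
    with 3 show ?thesis
      by (intro certificate_nonneg_if_bernstein[of "7/8" t "15/16"]) simp_all
  next
    case 4
    have "certificate t = (\<Sum>i\<le>6. [46608892/625, 257267072/625, 175583744/125, 77647872/25,
                                      486916096/125, 1550712832/625, 390070272/625] ! i
                                     * (t - 15/16) ^ i * (1 - t) ^ (6 - i))"
      by (simp add: certificate_def numeral_eq_Suc atMost_Suc) algebra
    with assms 4 show ?thesis
      by (intro certificate_nonneg_if_bernstein[of "15/16" t "1"]) simp_all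
  qed
qed

definition witness_coeffs :: "nat \<Rightarrow> real" where
  "witness_coeffs j =
     (if j = 1 then 1547/1000 else if j = 3 then -37/100 else if j = 6 then 83/1000 else 0)"

lemma cospoly_witness:
  "cospoly 6 witness_coeffs x = 1547/1000 * cos x - 37/100 * cos (3 * x) + 83/1000 * cos (6 * x)"
  by (simp add: cospoly_def witness_coeffs_def numeral_eq_Suc)

lemma witness_in_FKh: "cospoly 6 witness_coeffs \<in> FKh 6 3"
proof -
  have "(\<Sum>j=1..6. \<bar>witness_coeffs j\<bar>) = 2"
    by (simp add: witness_coeffs_def numeral_eq_Suc)
  moreover have "1 / cos (pi / real 3) = 2"
    by (simp add: cos_60)
  ultimately show ?thesis
    unfolding FKh_def by (intro CollectI exI[of _ witness_coeffs]) simp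
qed

lemma witness_ge:
  assumes "\<bar>x\<bar> \<le> pi / 3"
  shows "1.2228 \<le> cospoly 6 witness_coeffs x"
proof -
  have "cos (pi / 3) \<le> cos \<bar>x\<bar>"
    using assms by (intro cos_monotone_0_pi_le) auto
  then have "1/2 \<le> cos x"
    by (simp add: cos_60)
  moreover have "cos (6 * x) = 2 * cos (3 * x) ^ 2 - 1"
    using cos_double_cos[of "3 * x"] by simp
  then have "cospoly 6 witness_coeffs x - 1.2228 = certificate (cos x)"
    unfolding cospoly_witness certificate_def cos_treble_cos by algebra
  ultimately show ?thesis
    using certificate_nonneg[of "cos x"] by simp
qed

theorem theorem3p2:
  shows "\<exists>N0::nat. \<forall>N\<ge>N0. psi N 6 3 \<ge> 1.2228"
proof (intro exI[of _ 1] allI impI)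
  fix N :: nat
  assume "N \<ge> 1"
  then show "psi N 6 3 \<ge> 1.2228"
    using witness_in_FKh witness_ge by (intro psi_ge_of_FKh_ge) auto
qed

end
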